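(* Assume the family $\{\mathbf M_\theta\}_{\theta\in\mathcal I}$ of expectation matrices is good with respect to $\nu$, the process is uniformly allowable with constant $\alpha>0$, and there is $M<\infty$ with $\frac{\partial^2 f_\theta^{(k)}}{\partial s_j\partial s_i}(\mathbf 1)<M$ for all $\theta\in\mathcal I$, $i,j,k\in[N]$. Assume $\lambda>0$ and let $0<\rho<1$ with $\rho e^{\lambda}>1$. For $\theta\in\mathcal I$ set $\mathbf g_\theta(\mathbf s)=\mathbf 1-\rho\,\mathbf M_\theta(\mathbf 1-\mathbf s)$. Then there exists $\delta>0$ such that for all $\theta\in\mathcal I$ and all $\mathbf s\in[0,1]^N$ with $\max_{j\in[N]}(1-s_j)\le\delta$, we have $\mathbf g_\theta(\mathbf s)\ge\mathbf f_\theta(\mathbf s)$ componentwise.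
   Context: $N\ge2$, $\mathcal I$ countable, $\Sigma=\mathcal I^{\mathbb N}$, $\nu$ a shift-invariant ergodic probability measure on $\Sigma$; $[N]=\{0,\dots,N-1\}$; $\mathbf 1$ the all-one vector. For $\theta\in\mathcal I$, $\mathbf f_\theta=(f_\theta^{(0)},\dots,f_\theta^{(N-1)})$ with $f_\theta^{(i)}(\mathbf s)=\sum_{\mathbf z\in\mathbb N_0^N}f_\theta^{(i)}[\mathbf z]\mathbf s^{\mathbf z}$ pgfs on $\mathbb N_0^N$; $\mathbf M_\theta(i,k)=\partial f_\theta^{(i)}/\partial s_k(\mathbf 1)$ (finite), $\mathbf M_\theta(\mathbf 1-\mathbf s)$ is matrix–vector product. Allowable: each row and column has a positive entry. For nonnegative $\mathbf B$: $\|\mathbf B\|$ = sum of entries, $\|\mathbf B\|_1$ = max column sum, $(\mathbf B)_*$ = min column sum. Good: all $\mathbf M_\theta$ allowable, $\int|\log\|\mathbf M_{\theta_1}\|_1|d\nu+\int|\log(\mathbf M_{\theta_1})_*|d\nu<\infty$, and some word $(\theta_1,\dots,\theta_n)$ of positive $\nu$-cylinder measure has $\mathbf M_{\theta_1}\cdots\mathbf M_{\theta_n}$ strictly positive. $\lambda=\lim_n\frac1n\log\|\mathbf M_{\theta_1}\cdots\mathbf M_{\theta_n}\|$ ($\nu$-a.s. constant). Uniformly allowable with constant $\alpha$: $\inf\{\sum_{\mathbf w\in\mathbb N_0^N:\,w_i\ne0}f_\theta^{(k)}[\mathbf w]:\theta\in\mathcal I,\ k,i\in[N],\ \mathbf M_\theta(k,i)>0\}>\alpha$.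 *)

theory Defs
  imports "HOL-Probability.Probability"
begin

text \<open>Offspring vectors in N_0^N, represented as functions nat => nat vanishing outside [N].\<close>
definition offspring :: "nat \<Rightarrow> (nat \<Rightarrow> nat) set" where
  "offspring N = {z. \<forall>i. N \<le> i \<longrightarrow> z i = 0}"

definition is_pgf_coeffs :: "nat \<Rightarrow> ((nat \<Rightarrow> nat) \<Rightarrow> real) \<Rightarrow> bool" where
  "is_pgf_coeffs N p \<longleftrightarrow> (\<forall>z. 0 \<le> p z) \<and> (\<forall>z. z \<notin> offspring N \<longrightarrow> p z = 0)
     \<and> (p has_sum 1) (offspring N)"

definition pgf :: "nat \<Rightarrow> ((nat \<Rightarrow> nat) \<Rightarrow> real) \<Rightarrow> (nat \<Rightarrow> real) \<Rightarrow> real" where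
  "pgf N p s = (\<Sum>\<^sub>\<infinity>z\<in>offspring N. p z * (\<Prod>i<N. s i ^ z i))"

text \<open>First partial derivative at 1: d f / d s_i (1) = sum_z z_i p[z] (finite-mean assumption
  is expressed by summability).\<close>
definition pgf_d1 :: "nat \<Rightarrow> ((nat \<Rightarrow> nat) \<Rightarrow> real) \<Rightarrow> nat \<Rightarrow> real" where
  "pgf_d1 N p i = (\<Sum>\<^sub>\<infinity>z\<in>offspring N. real (z i) * p z)"

definition finite_mean :: "nat \<Rightarrow> ((nat \<Rightarrow> nat) \<Rightarrow> real) \<Rightarrow> bool" where
  "finite_mean N p \<longleftrightarrow> (\<forall>i<N. (\<lambda>z. real (z i) * p z) summable_on offspring N)"

definition pgf_d2 :: "nat \<Rightarrow> ((nat \<Rightarrow> nat) \<Rightarrow> real) \<Rightarrow> nat \<Rightarrow> nat \<Rightarrow> real" where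
  "pgf_d2 N p i j = (\<Sum>\<^sub>\<infinity>z\<in>offspring N.
      (real (z i) * real (z j) - (if i = j then real (z i) else 0)) * p z)"

definition finite_second_moments :: "nat \<Rightarrow> ((nat \<Rightarrow> nat) \<Rightarrow> real) \<Rightarrow> bool" where
  "finite_second_moments N p \<longleftrightarrow> (\<forall>i<N. \<forall>j<N.
     (\<lambda>z. (real (z i) * real (z j) - (if i = j then real (z i) else 0)) * p z) summable_on offspring N)"

text \<open>N x N matrices as nat => nat => real (entries with indices < N).\<close>
definition mat_mult :: "nat \<Rightarrow> (nat \<Rightarrow> nat \<Rightarrow> real) \<Rightarrow> (nat \<Rightarrow> nat \<Rightarrow> real) \<Rightarrow> (nat \<Rightarrow> nat \<Rightarrow> real)" where
  "mat_mult N A B = (\<lambda>i j. \<Sum>k<N. A i k * B k j)"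

definition mat_id :: "nat \<Rightarrow> nat \<Rightarrow> real" where
  "mat_id = (\<lambda>i j. if i = j then 1 else 0)"

fun mat_prod_seq :: "nat \<Rightarrow> (nat \<Rightarrow> nat \<Rightarrow> nat \<Rightarrow> real) \<Rightarrow> nat \<Rightarrow> nat \<Rightarrow> nat \<Rightarrow> real" where
  "mat_prod_seq N A 0 = mat_id"
| "mat_prod_seq N A (Suc n) = mat_mult N (mat_prod_seq N A n) (A n)"

definition mat_sum_norm :: "nat \<Rightarrow> (nat \<Rightarrow> nat \<Rightarrow> real) \<Rightarrow> real" where
  "mat_sum_norm N B = (\<Sum>i<N. \<Sum>j<N. B i j)"

definition mat_max_col :: "nat \<Rightarrow> (nat \<Rightarrow> nat \<Rightarrow> real) \<Rightarrow> real" where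
  "mat_max_col N B = Max ((\<lambda>j. \<Sum>i<N. B i j) ` {..<N})"

definition mat_min_col :: "nat \<Rightarrow> (nat \<Rightarrow> nat \<Rightarrow> real) \<Rightarrow> real" where
  "mat_min_col N B = Min ((\<lambda>j. \<Sum>i<N. B i j) ` {..<N})"

definition allowable :: "nat \<Rightarrow> (nat \<Rightarrow> nat \<Rightarrow> real) \<Rightarrow> bool" where
  "allowable N B \<longleftrightarrow> (\<forall>i<N. \<exists>j<N. B i j > 0) \<and> (\<forall>j<N. \<exists>i<N. B i j > 0)"

definition strictly_positive :: "nat \<Rightarrow> (nat \<Rightarrow> nat \<Rightarrow> real) \<Rightarrow> bool" where
  "strictly_positive N B \<longleftrightarrow> (\<forall>i<N. \<forall>j<N. B i j > 0)"

definition seq_space :: "(nat \<Rightarrow> 'i) measure" where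
  "seq_space = PiM UNIV (\<lambda>_. count_space UNIV)"

definition shift :: "(nat \<Rightarrow> 'i) \<Rightarrow> (nat \<Rightarrow> 'i)" where
  "shift \<omega> = (\<lambda>n. \<omega> (Suc n))"

definition shift_invariant_ergodic :: "(nat \<Rightarrow> 'i) measure \<Rightarrow> bool" where
  "shift_invariant_ergodic \<nu> \<longleftrightarrow> prob_space \<nu> \<and> sets \<nu> = sets seq_space
     \<and> shift \<in> measurable \<nu> \<nu> \<and> distr \<nu> \<nu> shift = \<nu>
     \<and> (\<forall>A\<in>sets \<nu>. shift -` A \<inter> space \<nu> = A \<longrightarrow> emeasure \<nu> A = 0 \<or> emeasure \<nu> A = 1)"

definition good :: "nat \<Rightarrow> ('i \<Rightarrow> nat \<Rightarrow> nat \<Rightarrow> real) \<Rightarrow> (nat \<Rightarrow> 'i) measure \<Rightarrow> bool" where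
  "good N M \<nu> \<longleftrightarrow> (\<forall>\<theta>. allowable N (M \<theta>))
     \<and> (\<integral>\<^sup>+\<omega>. ennreal \<bar>ln (mat_max_col N (M (\<omega> 0)))\<bar> \<partial>\<nu>)
       + (\<integral>\<^sup>+\<omega>. ennreal \<bar>ln (mat_min_col N (M (\<omega> 0)))\<bar> \<partial>\<nu>) < \<infinity>
     \<and> (\<exists>w::'i list. w \<noteq> [] \<and> emeasure \<nu> {\<omega>\<in>space \<nu>. \<forall>i<length w. \<omega> i = w ! i} > 0
          \<and> strictly_positive N (mat_prod_seq N (\<lambda>n. M (w ! n)) (length w)))"

end

theory Submission
  imports Defs
begin

text \<open>Write t = 1 - s. Pointwise, s^z is bounded by its second-order Bonferroni expansion
  1 - \<Sum>_i z_i t_i + (1/2) \<Sum>_{i,j} (z_i z_j - [i = j] z_i) t_i t_j, so averaging against the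
  offspring law gives f(s) \<le> 1 - (M t)_k + (1/2) \<Sum>_{i,j} t_i t_j f''_{ij}(1). Row i of this
  quadratic term vanishes when M_{ki} = 0 (then z_i = 0 almost surely); otherwise uniform
  allowability gives M_{ki} \<ge> P(z_i \<noteq> 0) > \<alpha>, and for t_j \<le> \<delta> = (1 - \<rho>) \<alpha> / (N Mbd),
  Mbd the bound on the second derivatives, the row is at most 2 (1 - \<rho>) t_i M_{ki}.\<close>

lemma has_sum_sum:
  fixes f :: "'j \<Rightarrow> 'a \<Rightarrow> real"
  assumes "finite I" "\<And>i. i \<in> I \<Longrightarrow> (f i has_sum a i) A"
  shows "((\<lambda>x. \<Sum>i\<in>I. f i x) has_sum (\<Sum>i\<in>I. a i)) A"
  using assms
proof (induction I rule: finite_induct)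
  case (insert x F)
  then have "((\<lambda>y. f x y + (\<Sum>i\<in>F. f i y)) has_sum (a x + (\<Sum>i\<in>F. a i))) A"
    by (intro has_sum_add) auto
  with insert show ?case by simp
qed simp

text \<open>A and Q are the sums of the b's and of their squares over the factors multiplied in so
  far; (A^2 - Q) / 2 is the sum of their pairwise products.\<close>

lemma bonferroni_step:
  fixes P A Q b :: real
  assumes "0 \<le> P" "P \<le> 1 - A + (A\<^sup>2 - Q) / 2" "Q \<le> A\<^sup>2" "0 \<le> A" "0 \<le> b" "b \<le> 1"
  shows "(1 - b) * P \<le> 1 - (A + b) + ((A + b)\<^sup>2 - (Q + b\<^sup>2)) / 2"
    and "Q + b\<^sup>2 \<le> (A + b)\<^sup>2"
proof -
  have "(1 - b) * P \<le> (1 - b) * (1 - A + (A\<^sup>2 - Q) / 2)"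
    using assms by (intro mult_left_mono) auto
  also have "\<dots> = 1 - (A + b) + ((A + b)\<^sup>2 - (Q + b\<^sup>2)) / 2 - b * (A\<^sup>2 - Q) / 2"
    by (simp add: field_simps power2_eq_square)
  also have "\<dots> \<le> 1 - (A + b) + ((A + b)\<^sup>2 - (Q + b\<^sup>2)) / 2"
    using assms by simp
  finally show "(1 - b) * P \<le> 1 - (A + b) + ((A + b)\<^sup>2 - (Q + b\<^sup>2)) / 2" .
  have "0 \<le> 2 * A * b"
    using assms by simp
  then show "Q + b\<^sup>2 \<le> (A + b)\<^sup>2"
    unfolding power2_sum using assms by linarith
qed

lemma bonferroni_power_step:
  fixes P A Q b :: real
  assumes "0 \<le> P" "P \<le> 1 - A + (A\<^sup>2 - Q) / 2" "Q \<le> A\<^sup>2" "0 \<le> A" "0 \<le> b" "b \<le> 1"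
  shows "(1 - b) ^ m * P \<le> 1 - (A + m * b) + ((A + m * b)\<^sup>2 - (Q + m * b\<^sup>2)) / 2
    \<and> Q + m * b\<^sup>2 \<le> (A + m * b)\<^sup>2"
proof (induction m)
  case (Suc m)
  have "0 \<le> (1 - b) ^ m * P" "0 \<le> A + m * b"
    using assms by simp_all
  from bonferroni_step[OF this(1) Suc[THEN conjunct1] Suc[THEN conjunct2] this(2) assms(5,6)]
  show ?case by (simp add: algebra_simps)
qed (use assms in simp)

lemma prod_power_le_bonferroni:
  fixes b :: "'a \<Rightarrow> real" and m :: "'a \<Rightarrow> nat"
  assumes "finite I" "\<And>i. i \<in> I \<Longrightarrow> 0 \<le> b i \<and> b i \<le> 1"
  shows "(\<Prod>i\<in>I. (1 - b i) ^ m i)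
    \<le> 1 - (\<Sum>i\<in>I. m i * b i) + ((\<Sum>i\<in>I. m i * b i)\<^sup>2 - (\<Sum>i\<in>I. m i * (b i)\<^sup>2)) / 2"
proof -
  have "(\<Prod>i\<in>I. (1 - b i) ^ m i)
      \<le> 1 - (\<Sum>i\<in>I. m i * b i) + ((\<Sum>i\<in>I. m i * b i)\<^sup>2 - (\<Sum>i\<in>I. m i * (b i)\<^sup>2)) / 2
    \<and> (\<Sum>i\<in>I. m i * (b i)\<^sup>2) \<le> (\<Sum>i\<in>I. m i * b i)\<^sup>2"
    using assms
  proof (induction I rule: finite_induct)
    case (insert x F)
    have "0 \<le> (\<Prod>i\<in>F. (1 - b i) ^ m i)" "0 \<le> (\<Sum>i\<in>F. m i * b i)"
      using insert.prems by (auto intro!: prod_nonneg sum_nonneg)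
    from bonferroni_power_step[OF this(1) insert.IH[THEN conjunct1] insert.IH[THEN conjunct2] this(2),
        of "b x" "m x"]
    show ?case
      using insert by (simp add: algebra_simps)
  qed simp
  then show ?thesis ..
qed

lemma sum_square_minus_sum_diag:
  fixes z t :: "'a \<Rightarrow> real"
  assumes "finite I"
  shows "(\<Sum>i\<in>I. z i * t i)\<^sup>2 - (\<Sum>i\<in>I. z i * (t i)\<^sup>2)
    = (\<Sum>i\<in>I. \<Sum>j\<in>I. t i * t j * (z i * z j - (if i = j then z i else 0)))"
proof -
  have diag: "(\<Sum>i\<in>I. \<Sum>j\<in>I. t i * t j * (if i = j then z i else 0)) = (\<Sum>i\<in>I. z i * (t i)\<^sup>2)"
    using assms by (simp add: if_distrib sum.delta power2_eq_square mult_ac cong: if_cong)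
  have "(\<Sum>i\<in>I. z i * t i)\<^sup>2 = (\<Sum>i\<in>I. \<Sum>j\<in>I. t i * t j * (z i * z j))"
    by (simp add: power2_eq_square sum_product algebra_simps)
  then show ?thesis
    by (simp add: diag[symmetric] right_diff_distrib sum_subtractf)
qed

lemma pgf_d1_has_sum:
  assumes "finite_mean N p" "i < N"
  shows "((\<lambda>z. real (z i) * p z) has_sum pgf_d1 N p i) (offspring N)"
  using assms unfolding finite_mean_def pgf_d1_def by simp

lemma pgf_d2_has_sum:
  assumes "finite_second_moments N p" "i < N" "j < N"
  shows "((\<lambda>z. (real (z i) * real (z j) - (if i = j then real (z i) else 0)) * p z)
    has_sum pgf_d2 N p i j) (offspring N)"
  using assms unfolding finite_second_moments_def pgf_d2_def by simp

lemma pgf_d1_nonneg: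
  assumes "\<And>z. 0 \<le> p z"
  shows "0 \<le> pgf_d1 N p i"
  unfolding pgf_d1_def using assms by (intro infsum_nonneg) simp

lemma pgf_d2_nonneg:
  assumes "\<And>z. 0 \<le> p z"
  shows "0 \<le> pgf_d2 N p i j"
proof -
  have "real n \<le> real n * real n" for n :: nat
    by (metis le_square of_nat_le_iff of_nat_mult)
  then show ?thesis
    unfolding pgf_d2_def using assms by (intro infsum_nonneg mult_nonneg_nonneg) auto
qed

lemma pgf_d2_eq_0_if_pgf_d1_eq_0:
  assumes "\<And>z. 0 \<le> p z" "finite_mean N p" "i < N" "pgf_d1 N p i = 0"
  shows "pgf_d2 N p i j = 0"
proof -
  have "real (z i) * p z = 0" if "z \<in> offspring N" for z
    using nonneg_has_sum_le_0D[OF pgf_d1_has_sum[OF assms(2,3)] _ _ that] assms(1,4) by simp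
  then show ?thesis
    unfolding pgf_d2_def by (intro infsum_0) (auto simp: algebra_simps)
qed

lemma prob_nonzero_le_pgf_d1:
  assumes "is_pgf_coeffs N p" "finite_mean N p" "i < N"
  shows "(\<Sum>\<^sub>\<infinity>w\<in>{w\<in>offspring N. w i \<noteq> 0}. p w) \<le> pgf_d1 N p i"
  unfolding pgf_d1_def
proof (rule infsum_mono_neutral)
  have "p summable_on offspring N"
    using assms(1) unfolding is_pgf_coeffs_def summable_on_def by blast
  then show "p summable_on {w\<in>offspring N. w i \<noteq> 0}"
    by (rule summable_on_subset_banach) auto
  show "(\<lambda>z. real (z i) * p z) summable_on offspring N"
    using pgf_d1_has_sum[OF assms(2,3)] unfolding summable_on_def by blast
next
  have p_nonneg: "0 \<le> p z" for z
    using assms(1) unfolding is_pgf_coeffs_def by blast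
  show "p z \<le> real (z i) * p z" if "z \<in> {w\<in>offspring N. w i \<noteq> 0} \<inter> offspring N" for z
    using that mult_right_mono[of 1 "real (z i)", OF _ p_nonneg] by simp
  show "0 \<le> real (z i) * p z" for z
    using p_nonneg[of z] by simp
qed auto

lemma pgf_le_second_order:
  assumes p: "is_pgf_coeffs N p" "finite_mean N p" "finite_second_moments N p"
    and s: "\<And>j. j < N \<Longrightarrow> 0 \<le> s j \<and> s j \<le> 1"
  shows "pgf N p s \<le> 1 - (\<Sum>i<N. pgf_d1 N p i * (1 - s i))
    + (\<Sum>i<N. \<Sum>j<N. (1 - s i) * (1 - s j) * pgf_d2 N p i j) / 2"
proof -
  define c where "c z i j = real (z i) * real (z j) - (if i = j then real (z i) else 0)"
    for z :: "nat \<Rightarrow> nat" and i j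
  define R where "R z = p z - (\<Sum>i<N. (1 - s i) * (real (z i) * p z))
    + (\<Sum>i<N. \<Sum>j<N. (1 - s i) * (1 - s j) * (c z i j * p z)) / 2" for z
  have p_nonneg: "0 \<le> p z" for z
    using p(1) unfolding is_pgf_coeffs_def by blast
  have pointwise: "p z * (\<Prod>i<N. s i ^ z i) \<le> R z" for z
  proof -
    have "(\<Prod>i<N. s i ^ z i) \<le> 1 - (\<Sum>i<N. z i * (1 - s i))
        + (\<Sum>i<N. \<Sum>j<N. (1 - s i) * (1 - s j) * c z i j) / 2"
      using prod_power_le_bonferroni[of "{..<N}" "\<lambda>i. 1 - s i" z] s
        sum_square_minus_sum_diag[of "{..<N}" "\<lambda>i. real (z i)" "\<lambda>i. 1 - s i"]
      by (simp add: c_def)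
    from mult_left_mono[OF this p_nonneg]
    show ?thesis
      by (simp add: R_def algebra_simps sum_distrib_left sum_divide_distrib)
  qed
  have R_has_sum: "(R has_sum 1 - (\<Sum>i<N. (1 - s i) * pgf_d1 N p i)
      + (\<Sum>i<N. \<Sum>j<N. (1 - s i) * (1 - s j) * pgf_d2 N p i j) / 2) (offspring N)"
  proof -
    have "(p has_sum 1) (offspring N)"
      using p(1) unfolding is_pgf_coeffs_def by blast
    moreover have "((\<lambda>z. \<Sum>i<N. (1 - s i) * (real (z i) * p z))
        has_sum (\<Sum>i<N. (1 - s i) * pgf_d1 N p i)) (offspring N)"
      by (intro has_sum_sum has_sum_cmult_right pgf_d1_has_sum[OF p(2)]) auto
    moreover have "((\<lambda>z. \<Sum>i<N. \<Sum>j<N. (1 - s i) * (1 - s j) * (c z i j * p z))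
        has_sum (\<Sum>i<N. \<Sum>j<N. (1 - s i) * (1 - s j) * pgf_d2 N p i j)) (offspring N)"
      unfolding c_def by (intro has_sum_sum has_sum_cmult_right pgf_d2_has_sum[OF p(3)]) auto
    ultimately show ?thesis
      unfolding R_def diff_conv_add_uminus
      by (intro has_sum_add has_sum_uminusI has_sum_divide_const)
  qed
  have summable: "(\<lambda>z. p z * (\<Prod>i<N. s i ^ z i)) summable_on offspring N"
  proof (rule summable_on_comparison_test)
    show "p summable_on offspring N"
      using p(1) unfolding is_pgf_coeffs_def summable_on_def by blast
    have "0 \<le> (\<Prod>i<N. s i ^ z i) \<and> (\<Prod>i<N. s i ^ z i) \<le> 1" for z
      using s by (auto intro!: prod_nonneg prod_le_1 power_le_one)
    then show "p z * (\<Prod>i<N. s i ^ z i) \<le> p z" "0 \<le> p z * (\<Prod>i<N. s i ^ z i)" for z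
      using p_nonneg[of z] by (auto simp: mult_left_le)
  qed
  show ?thesis
    using has_sum_mono[OF has_sum_infsum[OF summable] R_has_sum pointwise]
    unfolding pgf_def by (simp add: mult.commute)
qed

lemma quadratic_form_le_linear:
  fixes t m :: "nat \<Rightarrow> real" and D :: "nat \<Rightarrow> nat \<Rightarrow> real"
  assumes t: "\<And>i. i < N \<Longrightarrow> 0 \<le> t i \<and> t i \<le> \<delta>"
    and D: "\<And>i j. i < N \<Longrightarrow> j < N \<Longrightarrow> 0 \<le> D i j \<and> D i j \<le> B"
    and m: "\<And>i. i < N \<Longrightarrow> 0 \<le> m i"
    and rows: "\<And>i. i < N \<Longrightarrow> (\<forall>j<N. D i j = 0) \<or> a \<le> m i"
    and small: "real N * B * \<delta> \<le> c * a" and "0 \<le> c"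
  shows "(\<Sum>i<N. \<Sum>j<N. t i * t j * D i j) \<le> c * (\<Sum>i<N. m i * t i)"
proof -
  have "(\<Sum>j<N. t i * t j * D i j) \<le> c * (m i * t i)" if i: "i < N" for i
    using rows[OF i]
  proof
    assume "\<forall>j<N. D i j = 0"
    then show ?thesis
      using t[OF i] m[OF i] \<open>0 \<le> c\<close> by simp
  next
    assume "a \<le> m i"
    have "0 \<le> \<delta>"
      using t[OF i] by linarith
    then have "(\<Sum>j<N. t i * t j * D i j) \<le> (\<Sum>j<N. t i * \<delta> * B)"
      using t D i by (intro sum_mono mult_mono) auto
    also have "\<dots> = t i * (real N * B * \<delta>)"
      by (simp add: algebra_simps)
    also have "\<dots> \<le> t i * (c * a)"
      using t[OF i] small by (intro mult_left_mono) auto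
    also have "\<dots> \<le> c * (m i * t i)"
      using mult_left_mono[OF \<open>a \<le> m i\<close>, of "c * t i"] t[OF i] \<open>0 \<le> c\<close> by (simp add: algebra_simps)
    finally show ?thesis .
  qed
  then show ?thesis
    unfolding sum_distrib_left by (intro sum_mono) simp
qed

lemma pgf_d2_row_eq_0_or_mean_gt:
  fixes p :: "'i \<Rightarrow> nat \<Rightarrow> (nat \<Rightarrow> nat) \<Rightarrow> real"
  assumes pgfs: "\<And>\<theta> k. k < N \<Longrightarrow> is_pgf_coeffs N (p \<theta> k)"
    and means: "\<And>\<theta> k. k < N \<Longrightarrow> finite_mean N (p \<theta> k)"
    and M_def: "\<And>\<theta> k i. M \<theta> k i = pgf_d1 N (p \<theta> k) i"
    and unif_allow: "(INF x\<in>{(\<theta>, k, i). k < N \<and> i < N \<and> M \<theta> k i > 0}.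
                        (case x of (\<theta>, k, i) \<Rightarrow>
                          \<Sum>\<^sub>\<infinity>w\<in>{w\<in>offspring N. w i \<noteq> 0}. p \<theta> k w)) > \<alpha>"
    and "k < N" "i < N"
  shows "(\<forall>j<N. pgf_d2 N (p \<theta> k) i j = 0) \<or> \<alpha> < M \<theta> k i"
proof -
  have p_nonneg: "0 \<le> p \<theta>' k' z" if "k' < N" for \<theta>' k' z
    using pgfs[OF that] unfolding is_pgf_coeffs_def by blast
  have "0 \<le> M \<theta> k i"
    using pgf_d1_nonneg[OF p_nonneg[OF \<open>k < N\<close>]] by (simp add: M_def)
  then consider "M \<theta> k i = 0" | "0 < M \<theta> k i"
    by linarith
  then show ?thesis
  proof cases
    case 1
    then show ?thesis
      using pgf_d2_eq_0_if_pgf_d1_eq_0[OF p_nonneg means] assms(5,6) M_def by auto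
  next
    case 2
    let ?prob_nonzero = "\<lambda>(\<theta>, k, i). \<Sum>\<^sub>\<infinity>w\<in>{w\<in>offspring N. w i \<noteq> 0}. p \<theta> k w"
    have "bdd_below (?prob_nonzero ` {(\<theta>, k, i). k < N \<and> i < N \<and> M \<theta> k i > 0})"
      using p_nonneg by (intro bdd_belowI2[of _ 0]) (auto intro!: infsum_nonneg)
    from less_cINF_D[OF this unif_allow, of "(\<theta>, k, i)"]
    have "\<alpha> < ?prob_nonzero (\<theta>, k, i)"
      using assms(5,6) 2 by simp
    also have "\<dots> \<le> M \<theta> k i"
      using prob_nonzero_le_pgf_d1[OF pgfs means] assms(5,6) by (simp add: M_def)
    finally show ?thesis ..
  qed
qed

lemma pgf_le_linear_near_1:
  assumes p: "is_pgf_coeffs N p" "finite_mean N p" "finite_second_moments N p"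
    and bounded: "\<And>i j. i < N \<Longrightarrow> j < N \<Longrightarrow> pgf_d2 N p i j \<le> B"
    and rows: "\<And>i. i < N \<Longrightarrow> (\<forall>j<N. pgf_d2 N p i j = 0) \<or> a \<le> pgf_d1 N p i"
    and small: "real N * B * \<delta> \<le> 2 * (1 - \<rho>) * a" and "\<rho> \<le> 1"
    and s: "\<And>j. j < N \<Longrightarrow> 0 \<le> s j \<and> s j \<le> 1 \<and> 1 - s j \<le> \<delta>"
  shows "pgf N p s \<le> 1 - \<rho> * (\<Sum>j<N. pgf_d1 N p j * (1 - s j))"
proof -
  let ?L = "\<Sum>j<N. pgf_d1 N p j * (1 - s j)"
  let ?Q = "\<Sum>i<N. \<Sum>j<N. (1 - s i) * (1 - s j) * pgf_d2 N p i j"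
  have p_nonneg: "0 \<le> p z" for z
    using p(1) unfolding is_pgf_coeffs_def by blast
  have "pgf N p s \<le> 1 - ?L + ?Q / 2"
    using pgf_le_second_order[OF p] s by simp
  moreover have "?Q \<le> 2 * (1 - \<rho>) * ?L"
    by (rule quadratic_form_le_linear[OF _ _ _ rows small])
      (use s bounded \<open>\<rho> \<le> 1\<close> pgf_d2_nonneg[OF p_nonneg] pgf_d1_nonneg[OF p_nonneg] in auto)
  moreover have "2 * (1 - \<rho>) * ?L = 2 * ?L - 2 * (\<rho> * ?L)"
    by (simp only: left_diff_distrib right_diff_distrib mult_1_right mult.assoc mult.left_commute)
  ultimately show ?thesis
    by linarith
qed

theorem lemma5p2:
  fixes N :: nat
    and p :: "'i::countable \<Rightarrow> nat \<Rightarrow> (nat \<Rightarrow> nat) \<Rightarrow> real"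
    and \<nu> :: "(nat \<Rightarrow> 'i) measure"
    and M :: "'i \<Rightarrow> nat \<Rightarrow> nat \<Rightarrow> real"
    and \<alpha> Mbd lam \<rho> :: real
  assumes "N \<ge> 2"
    and pgfs: "\<And>\<theta> k. k < N \<Longrightarrow> is_pgf_coeffs N (p \<theta> k)"
    and means: "\<And>\<theta> k. k < N \<Longrightarrow> finite_mean N (p \<theta> k)"
    and M_def: "\<And>\<theta> k i. M \<theta> k i = pgf_d1 N (p \<theta> k) i"
    and erg: "shift_invariant_ergodic \<nu>"
    and good: "good N M \<nu>"
    and "\<alpha> > 0"
    and unif_allow: "(INF x\<in>{(\<theta>, k, i). k < N \<and> i < N \<and> M \<theta> k i > 0}.
                        (case x of (\<theta>, k, i) \<Rightarrow>
                          \<Sum>\<^sub>\<infinity>w\<in>{w\<in>offspring N. w i \<noteq> 0}. p \<theta> k w)) > \<alpha>"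
    and second: "\<And>\<theta> k. k < N \<Longrightarrow> finite_second_moments N (p \<theta> k)"
    and second_bd: "\<And>\<theta> i j k. i < N \<Longrightarrow> j < N \<Longrightarrow> k < N \<Longrightarrow> pgf_d2 N (p \<theta> k) i j < Mbd"
    and lyap: "AE \<omega> in \<nu>. (\<lambda>n. ln (mat_sum_norm N (mat_prod_seq N (\<lambda>m. M (\<omega> m)) n)) / real n)
                  \<longlonglongrightarrow> lam"
    and "lam > 0"
    and "0 < \<rho>" "\<rho> < 1" "\<rho> * exp lam > 1"
  shows "\<exists>\<delta>>0. \<forall>\<theta> s. (\<forall>j<N. 0 \<le> s j \<and> s j \<le> 1)
            \<longrightarrow> Max ((\<lambda>j. 1 - s j) ` {..<N}) \<le> \<delta>
            \<longrightarrow> (\<forall>k<N. 1 - \<rho> * (\<Sum>j<N. M \<theta> k j * (1 - s j)) \<ge> pgf N (p \<theta> k) s)"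
proof -
  have p_nonneg: "\<And>\<theta> k z. k < N \<Longrightarrow> 0 \<le> p \<theta> k z"
    using pgfs unfolding is_pgf_coeffs_def by blast
  have "0 < N"
    using \<open>N \<ge> 2\<close> by simp
  then have "0 < Mbd"
    using pgf_d2_nonneg[OF p_nonneg] second_bd by (meson le_less_trans)
  define \<delta> where "\<delta> = (1 - \<rho>) * \<alpha> / (real N * Mbd)"
  have "0 < \<delta>" and small: "real N * Mbd * \<delta> \<le> 2 * (1 - \<rho>) * \<alpha>"
    unfolding \<delta>_def using \<open>0 < N\<close> \<open>0 < Mbd\<close> \<open>\<rho> < 1\<close> \<open>\<alpha> > 0\<close> by simp_all
  show ?thesis
  proof (intro exI[of _ \<delta>] conjI allI impI \<open>0 < \<delta>\<close>)
    fix \<theta> s k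
    assume s: "\<forall>j<N. 0 \<le> s j \<and> s j \<le> 1" and max: "Max ((\<lambda>j. 1 - s j) ` {..<N}) \<le> \<delta>" and "k < N"
    have "1 - s j \<le> \<delta>" if "j < N" for j
      using that by (intro order_trans[OF Max_ge max]) auto
    moreover have "(\<forall>j<N. pgf_d2 N (p \<theta> k) i j = 0) \<or> \<alpha> \<le> pgf_d1 N (p \<theta> k) i" if "i < N" for i
      using pgf_d2_row_eq_0_or_mean_gt[OF pgfs means M_def unif_allow \<open>k < N\<close> that, where \<theta> = \<theta>]
      by (auto simp: M_def)
    ultimately have "pgf N (p \<theta> k) s \<le> 1 - \<rho> * (\<Sum>j<N. pgf_d1 N (p \<theta> k) j * (1 - s j))"
      using second_bd \<open>k < N\<close> \<open>\<rho> < 1\<close> s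
      by (intro pgf_le_linear_near_1[OF pgfs means second _ _ small]) (auto simp: less_imp_le)
    then show "1 - \<rho> * (\<Sum>j<N. M \<theta> k j * (1 - s j)) \<ge> pgf N (p \<theta> k) s"
      by (simp add: M_def)
  qed
qed

end
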